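(* Let $\varepsilon\in(0,3)$. There exists $n_0$ (depending on $\varepsilon$) such that for every $n\ge n_0$ and every real normed space $X$ of dimension $n$ there exists an approximately convex set $A\subseteq X$ with $$\mathcal{H}(A,\operatorname{Co}(A))\ge\log_2 n-\varepsilon\qquad\text{and}\qquad \operatorname{diam}(A)\le \frac{25}{\varepsilon}(\log_2 n)^2\, d(X,\ell_1^n).$$
   Context: A set $A$ is approximately convex if $d(tx+(1-t)y,A)\le1$ for all $x,y\in A$, $t\in[0,1]$, where $d(x,A)=\inf_{a\in A}\|x-a\|$. $\mathcal{H}$ is the Hausdorff distance, $\operatorname{Co}$ the convex hull, $\operatorname{diam}(A)=\sup\{\|x-y\|:x,y\in A\}$. $d(X,Y)=\inf\{\|T\|\|T^{-1}\|: T:X\to Y \text{ a linear isomorphism}\}$ is the Banach–Mazur distance, and $\ell_1^n$ is $\mathbb{R}^n$ with the norm $\sum|a_i|$. *)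

theory Defs
  imports "HOL-Analysis.Analysis"
begin

text \<open>An n-dimensional real normed space is modelled (up to isometry) as
  R^n = V n, the functions nat => real vanishing outside {0..<n}, equipped
  with an arbitrary norm N.\<close>

definition V :: "nat \<Rightarrow> (nat \<Rightarrow> real) set" where
  "V n = {x. \<forall>i\<ge>n. x i = 0}"

definition is_norm_on :: "nat \<Rightarrow> ((nat \<Rightarrow> real) \<Rightarrow> real) \<Rightarrow> bool" where
  "is_norm_on n N \<longleftrightarrow>
     (\<forall>x\<in>V n. 0 \<le> N x) \<and>
     (\<forall>x\<in>V n. N x = 0 \<longleftrightarrow> x = (\<lambda>_. 0)) \<and>
     (\<forall>x\<in>V n. \<forall>c. N (\<lambda>i. c * x i) = \<bar>c\<bar> * N x) \<and>
     (\<forall>x\<in>V n. \<forall>y\<in>V n. N (\<lambda>i. x i + y i) \<le> N x + N y)"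

definition l1norm :: "nat \<Rightarrow> (nat \<Rightarrow> real) \<Rightarrow> real" where
  "l1norm n x = (\<Sum>i<n. \<bar>x i\<bar>)"

definition linear_on :: "nat \<Rightarrow> ((nat \<Rightarrow> real) \<Rightarrow> (nat \<Rightarrow> real)) \<Rightarrow> bool" where
  "linear_on n T \<longleftrightarrow> T ` V n \<subseteq> V n \<and>
     (\<forall>x\<in>V n. \<forall>y\<in>V n. T (\<lambda>i. x i + y i) = (\<lambda>i. T x i + T y i)) \<and>
     (\<forall>x\<in>V n. \<forall>c. T (\<lambda>i. c * x i) = (\<lambda>i. c * T x i))"

definition opnorm :: "nat \<Rightarrow> ((nat \<Rightarrow> real) \<Rightarrow> real) \<Rightarrow> ((nat \<Rightarrow> real) \<Rightarrow> real)
     \<Rightarrow> ((nat \<Rightarrow> real) \<Rightarrow> (nat \<Rightarrow> real)) \<Rightarrow> real" where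
  "opnorm n N1 N2 T = Sup {N2 (T x) | x. x \<in> V n \<and> N1 x \<le> 1}"

definition bm_dist_l1 :: "nat \<Rightarrow> ((nat \<Rightarrow> real) \<Rightarrow> real) \<Rightarrow> real" where
  "bm_dist_l1 n N = Inf {opnorm n N (l1norm n) T * opnorm n (l1norm n) N (inv_into (V n) T) | T.
       linear_on n T \<and> bij_betw T (V n) (V n)}"

definition setdist_N :: "((nat \<Rightarrow> real) \<Rightarrow> real) \<Rightarrow> (nat \<Rightarrow> real) \<Rightarrow> (nat \<Rightarrow> real) set \<Rightarrow> real" where
  "setdist_N N z A = Inf {N (\<lambda>i. z i - a i) | a. a \<in> A}"

definition approx_convex :: "((nat \<Rightarrow> real) \<Rightarrow> real) \<Rightarrow> (nat \<Rightarrow> real) set \<Rightarrow> bool" where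
  "approx_convex N A \<longleftrightarrow> (\<forall>x\<in>A. \<forall>y\<in>A. \<forall>t::real. 0 \<le> t \<and> t \<le> 1 \<longrightarrow>
      setdist_N N (\<lambda>i. t * x i + (1 - t) * y i) A \<le> 1)"

definition conv_hull :: "(nat \<Rightarrow> real) set \<Rightarrow> (nat \<Rightarrow> real) set" where
  "conv_hull A = {y. \<exists>S c. finite S \<and> S \<noteq> {} \<and> S \<subseteq> A \<and> (\<forall>x\<in>S. 0 \<le> c x) \<and> sum c S = 1 \<and>
      y = (\<lambda>j. \<Sum>x\<in>S. c x * x j)}"

definition esetdist_N :: "((nat \<Rightarrow> real) \<Rightarrow> real) \<Rightarrow> (nat \<Rightarrow> real) \<Rightarrow> (nat \<Rightarrow> real) set \<Rightarrow> ereal" where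
  "esetdist_N N z A = (INF a\<in>A. ereal (N (\<lambda>i. z i - a i)))"

definition diam_N :: "((nat \<Rightarrow> real) \<Rightarrow> real) \<Rightarrow> (nat \<Rightarrow> real) set \<Rightarrow> ereal" where
  "diam_N N A = (SUP p\<in>A \<times> A. ereal (N (\<lambda>i. fst p i - snd p i)))"

definition hausdorff_N :: "((nat \<Rightarrow> real) \<Rightarrow> real) \<Rightarrow> (nat \<Rightarrow> real) set \<Rightarrow> (nat \<Rightarrow> real) set \<Rightarrow> ereal" where
  "hausdorff_N N A B = max (SUP a\<in>A. esetdist_N N a B) (SUP b\<in>B. esetdist_N N b A)"

end

theory Submission
  imports Defs
begin

text \<open>
  Take a linear map \<open>L\<close> from \<open>l\<^sub>1\<^sup>n\<close> into \<open>X\<close> with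
  \<open>N (L c) \<le> \<parallel>c\<parallel>\<^sub>1 \<le> (5/4) d(X, l\<^sub>1\<^sup>n) N (L c)\<close>, and a unit vector \<open>y\<close> that is almost
  Birkhoff--James orthogonal to the image of the first \<open>n - 1\<close> coordinates. The set \<open>A\<close>
  consists of the points \<open>S L p - H(p) y\<close>, where \<open>p\<close> ranges over the probability simplex in
  these coordinates and \<open>H\<close> is the binary entropy. Since \<open>H\<close> is concave and
  \<open>H(t p + (1 - t) q) \<le> t H(p) + (1 - t) H(q) + 1\<close>, the set \<open>A\<close> is approximately convex.
  The image of the uniform distribution \<open>u\<close> is the barycentre of the images of the vertices,
  where \<open>H\<close> vanishes, yet it is far from \<open>A\<close>: if \<open>p\<close> is far from \<open>u\<close> the term
  \<open>S L (u - p)\<close> is long, and if \<open>p\<close> is close to \<open>u\<close> then \<open>H(p)\<close> is close to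
  \<open>log\<^sub>2 (n - 1)\<close>, a length that the orthogonality of \<open>y\<close> preserves. The diameter of \<open>A\<close>
  is at most \<open>2 S + log\<^sub>2 n\<close>; choosing \<open>S\<close> of order \<open>d(X, l\<^sub>1\<^sup>n) (log\<^sub>2 n)\<^sup>2 / \<epsilon>\<close>
  balances the two cases.
\<close>

definition unit_vec :: "nat \<Rightarrow> nat \<Rightarrow> real" where
  "unit_vec k = (\<lambda>i. if i = k then 1 else 0)"

lemma V_add: "x \<in> V n \<Longrightarrow> y \<in> V n \<Longrightarrow> (\<lambda>i. x i + y i) \<in> V n"
  and V_diff: "x \<in> V n \<Longrightarrow> y \<in> V n \<Longrightarrow> (\<lambda>i. x i - y i) \<in> V n"
  and V_scale: "x \<in> V n \<Longrightarrow> (\<lambda>i. c * x i) \<in> V n"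
  and V_zero: "(\<lambda>i. 0) \<in> V n"
  and V_mono: "m \<le> n \<Longrightarrow> x \<in> V m \<Longrightarrow> x \<in> V n"
  and unit_vec_in_V: "k < n \<Longrightarrow> unit_vec k \<in> V n"
  by (auto simp: V_def unit_vec_def)

lemma V_sum: "(\<And>k. k \<in> F \<Longrightarrow> f k \<in> V n) \<Longrightarrow> (\<lambda>i. \<Sum>k\<in>F. f k i) \<in> V n"
  by (auto simp: V_def intro!: sum.neutral)

lemma V_unit_vec_expansion: "x \<in> V n \<Longrightarrow> x = (\<lambda>i. \<Sum>k<n. x k * unit_vec k i)"
  by (rule ext) (simp add: V_def unit_vec_def if_distrib sum.delta cong: if_cong)

definition seminorm_on :: "nat \<Rightarrow> ((nat \<Rightarrow> real) \<Rightarrow> real) \<Rightarrow> bool" where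
  "seminorm_on n N \<longleftrightarrow>
     (\<forall>x\<in>V n. \<forall>c. N (\<lambda>i. c * x i) = \<bar>c\<bar> * N x) \<and>
     (\<forall>x\<in>V n. \<forall>y\<in>V n. N (\<lambda>i. x i + y i) \<le> N x + N y)"

lemma is_norm_on_imp_seminorm_on: "is_norm_on n N \<Longrightarrow> seminorm_on n N"
  by (simp add: is_norm_on_def seminorm_on_def)

context
  fixes n N assumes N: "seminorm_on n N"
begin

lemma seminorm_scale: "x \<in> V n \<Longrightarrow> N (\<lambda>i. c * x i) = \<bar>c\<bar> * N x"
  using N by (simp add: seminorm_on_def)

lemma seminorm_triangle: "x \<in> V n \<Longrightarrow> y \<in> V n \<Longrightarrow> N (\<lambda>i. x i + y i) \<le> N x + N y"
  using N by (simp add: seminorm_on_def)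

lemma seminorm_zero: "N (\<lambda>i. 0) = 0"
  using seminorm_scale[of "\<lambda>i. 0" 0] by (simp add: V_zero)

lemma seminorm_minus: "x \<in> V n \<Longrightarrow> N (\<lambda>i. - x i) = N x"
  using seminorm_scale[of x "-1"] by simp

lemma seminorm_nonneg: "x \<in> V n \<Longrightarrow> 0 \<le> N x"
  using seminorm_triangle[of x "\<lambda>i. - x i"] seminorm_minus[of x] seminorm_zero
  by (simp add: V_scale[of x n "-1", simplified])

lemma seminorm_triangle_diff: "x \<in> V n \<Longrightarrow> y \<in> V n \<Longrightarrow> N (\<lambda>i. x i - y i) \<le> N x + N y"
  using seminorm_triangle[of x "\<lambda>i. - y i"] seminorm_minus[of y]
  by (simp add: V_scale[of y n "-1", simplified])

lemma seminorm_reverse_triangle: "x \<in> V n \<Longrightarrow> y \<in> V n \<Longrightarrow> N x - N y \<le> N (\<lambda>i. x i + y i)"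
  using seminorm_triangle[of "\<lambda>i. x i + y i" "\<lambda>i. - y i"] seminorm_minus[of y]
  by (simp add: V_add V_scale[of y n "-1", simplified])

lemma seminorm_abs_diff: "x \<in> V n \<Longrightarrow> y \<in> V n \<Longrightarrow> \<bar>N x - N y\<bar> \<le> N (\<lambda>i. x i - y i)"
  using seminorm_reverse_triangle[of x "\<lambda>i. - y i"] seminorm_reverse_triangle[of y "\<lambda>i. x i - y i"]
    seminorm_minus[of y] seminorm_minus[of "\<lambda>i. x i - y i"]
  by (simp add: V_diff V_scale[of y n "-1", simplified] abs_le_iff)

lemma seminorm_sum:
  "finite F \<Longrightarrow> (\<And>k. k \<in> F \<Longrightarrow> f k \<in> V n) \<Longrightarrow> N (\<lambda>i. \<Sum>k\<in>F. f k i) \<le> (\<Sum>k\<in>F. N (f k))"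
proof (induction F rule: finite_induct)
  case empty
  then show ?case using seminorm_zero by simp
next
  case (insert a F)
  then have "N (\<lambda>i. f a i + (\<Sum>k\<in>F. f k i)) \<le> N (f a) + N (\<lambda>i. \<Sum>k\<in>F. f k i)"
    by (intro seminorm_triangle V_sum) auto
  with insert show ?case by simp
qed

lemma seminorm_le_l1norm: "x \<in> V n \<Longrightarrow> N x \<le> (\<Sum>k<n. N (unit_vec k)) * l1norm n x"
proof -
  assume x: "x \<in> V n"
  have "N x \<le> (\<Sum>k<n. N (\<lambda>i. x k * unit_vec k i))"
    by (subst V_unit_vec_expansion[OF x]) (intro seminorm_sum V_scale unit_vec_in_V; simp)
  also have "\<dots> = (\<Sum>k<n. \<bar>x k\<bar> * N (unit_vec k))"
    by (simp add: seminorm_scale unit_vec_in_V)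
  also have "\<dots> \<le> (\<Sum>k<n. \<bar>x k\<bar> * (\<Sum>j<n. N (unit_vec j)))"
    by (intro sum_mono mult_left_mono member_le_sum seminorm_nonneg unit_vec_in_V) auto
  finally show ?thesis by (simp add: l1norm_def sum_distrib_right mult.commute)
qed

end

lemma seminorm_on_l1norm: "seminorm_on n (l1norm n)"
  unfolding seminorm_on_def l1norm_def
  by (auto simp: abs_mult sum_distrib_left sum.distrib[symmetric] intro!: sum_mono abs_triangle_ineq)

lemma l1norm_nonneg: "0 \<le> l1norm n x"
  by (simp add: l1norm_def sum_nonneg)

lemma abs_le_l1norm: "i < n \<Longrightarrow> \<bar>x i\<bar> \<le> l1norm n x"
  unfolding l1norm_def by (rule member_le_sum) auto

lemma l1norm_eq_0: "x \<in> V n \<Longrightarrow> l1norm n x = 0 \<longleftrightarrow> x = (\<lambda>i. 0)"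
  using abs_le_l1norm[of _ n x] by (auto simp: V_def l1norm_def intro!: ext) (meson not_le)

lemma is_norm_on_l1norm: "is_norm_on n (l1norm n)"
  using seminorm_on_l1norm[of n] l1norm_nonneg l1norm_eq_0
  unfolding is_norm_on_def seminorm_on_def by blast

lemma l1norm_unit_vec: "k < n \<Longrightarrow> l1norm n (unit_vec k) = 1"
  by (simp add: l1norm_def unit_vec_def if_distrib sum.delta cong: if_cong)

lemma l1norm_V_mono: "m \<le> n \<Longrightarrow> x \<in> V m \<Longrightarrow> l1norm n x = l1norm m x"
  unfolding l1norm_def by (rule sum.mono_neutral_right) (auto simp: V_def)

section \<open>Every norm dominates a multiple of the \<open>l\<^sub>1\<close> norm\<close>

lemma compact_coordinate_box: "compact {x::nat\<Rightarrow>real. \<forall>i. x i \<in> (if i < n then {-1..1} else {0})}"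
proof -
  let ?S = "\<lambda>i::nat. if i < n then {-1..1::real} else {0}"
  have "compactin (product_topology (\<lambda>i. euclidean) UNIV) (PiE UNIV ?S)"
    by (subst compactin_PiE) auto
  then have "compact (PiE UNIV ?S)"
    by (simp add: euclidean_product_topology)
  moreover have "PiE UNIV ?S = {x. \<forall>i. x i \<in> ?S i}"
    by (auto simp: PiE_def Pi_def)
  ultimately show ?thesis by simp
qed

lemma continuous_on_l1norm_diff: "continuous_on UNIV (\<lambda>y. l1norm n (\<lambda>i. y i - x i))"
  unfolding l1norm_def by (intro continuous_intros continuous_on_product_coordinates)

lemma seminorm_continuous_on:
  assumes N: "seminorm_on n N" and K: "K \<subseteq> V n"
  shows "continuous_on K N"
  unfolding continuous_on_def
proof
  fix x assume x: "x \<in> K"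
  define M where "M = (\<Sum>k<n. N (unit_vec k))"
  have "continuous_on K (\<lambda>y. M * l1norm n (\<lambda>i. y i - x i))"
    by (intro continuous_intros continuous_on_subset[OF continuous_on_l1norm_diff]) auto
  then have "((\<lambda>y. M * l1norm n (\<lambda>i. y i - x i)) \<longlongrightarrow> M * l1norm n (\<lambda>i. x i - x i)) (at x within K)"
    using x unfolding continuous_on_def by blast
  then have "((\<lambda>y. M * l1norm n (\<lambda>i. y i - x i)) \<longlongrightarrow> 0) (at x within K)"
    by (simp add: l1norm_def)
  moreover have "norm (N y - N x) \<le> M * l1norm n (\<lambda>i. y i - x i)" if "y \<in> K" for y
  proof -
    have "y \<in> V n" "x \<in> V n"
      using K x that by auto
    then show ?thesis
      using seminorm_abs_diff[OF N] seminorm_le_l1norm[OF N V_diff]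
      unfolding M_def real_norm_def by (meson order_trans)
  qed
  then have "\<forall>\<^sub>F y in at x within K. norm (N y - N x) \<le> M * l1norm n (\<lambda>i. y i - x i)"
    unfolding eventually_at_filter by (auto intro: always_eventually)
  ultimately show "(N \<longlongrightarrow> N x) (at x within K)"
    by (subst Lim_null) (rule Lim_null_comparison)
qed

lemma norm_ge_l1norm:
  assumes N: "is_norm_on n N"
  obtains c where "0 < c" "\<And>x. x \<in> V n \<Longrightarrow> c * l1norm n x \<le> N x"
proof (cases "n = 0")
  case True
  then show ?thesis
    using N that[of 1] by (simp add: l1norm_def is_norm_on_def)
next
  case False
  have sN: "seminorm_on n N"
    using N by (rule is_norm_on_imp_seminorm_on)
  define K where "K = {x. \<forall>i. x i \<in> (if i < n then {-1..1} else {0})} \<inter> {x. l1norm n x = 1}"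
  have "compact K"
    unfolding K_def using continuous_on_l1norm_diff[of n "\<lambda>i. 0"]
    by (intro compact_Int_closed compact_coordinate_box closed_Collect_eq) auto
  moreover have KV: "K \<subseteq> V n"
  proof
    fix x assume "x \<in> K"
    then show "x \<in> V n"
      unfolding K_def V_def by (auto simp: not_less[symmetric] split: if_splits)
  qed
  moreover have "unit_vec 0 \<in> K"
    using False l1norm_unit_vec[of 0 n] by (simp add: K_def unit_vec_def)
  ultimately obtain x0 where x0: "x0 \<in> K" and x0_min: "\<And>y. y \<in> K \<Longrightarrow> N x0 \<le> N y"
    using continuous_attains_inf[OF _ _ seminorm_continuous_on[OF sN KV]] by blast
  have "x0 \<noteq> (\<lambda>i. 0)"
    using x0 by (auto simp: K_def l1norm_def)
  then have "0 < N x0"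
    using N x0 KV by (force simp: is_norm_on_def less_le)
  moreover have "N x0 * l1norm n x \<le> N x" if x: "x \<in> V n" for x
  proof (cases "l1norm n x = 0")
    case True
    then show ?thesis using N x by (simp add: is_norm_on_def)
  next
    case False
    then have l: "0 < l1norm n x"
      using l1norm_nonneg[of n x] by linarith
    define y where "y = (\<lambda>i. (1 / l1norm n x) * x i)"
    have "y \<in> K"
      using x l abs_le_l1norm[of _ n x] seminorm_scale[OF seminorm_on_l1norm x, of "1 / l1norm n x"]
      by (auto simp: K_def y_def V_def abs_le_iff divide_simps) (smt (verit))
    then have "N x0 \<le> N y"
      by (rule x0_min)
    also have "N y = N x / l1norm n x"
      using seminorm_scale[OF sN x, of "1 / l1norm n x"] l by (simp add: y_def)
    finally show ?thesis
      using l by (simp add: field_simps)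
  qed
  ultimately show ?thesis
    using that by blast
qed

section \<open>Linear maps and the Banach--Mazur distance\<close>

context
  fixes n T assumes T: "linear_on n T"
begin

lemma linear_in_V: "x \<in> V n \<Longrightarrow> T x \<in> V n"
  using T by (auto simp: linear_on_def)

lemma linear_add: "x \<in> V n \<Longrightarrow> y \<in> V n \<Longrightarrow> T (\<lambda>i. x i + y i) = (\<lambda>i. T x i + T y i)"
  using T by (simp add: linear_on_def)

lemma linear_scale: "x \<in> V n \<Longrightarrow> T (\<lambda>i. c * x i) = (\<lambda>i. c * T x i)"
  using T by (simp add: linear_on_def)

lemma linear_comb:
  "x \<in> V n \<Longrightarrow> y \<in> V n \<Longrightarrow> T (\<lambda>i. a * x i + b * y i) = (\<lambda>i. a * T x i + b * T y i)"
  using linear_add[of "\<lambda>i. a * x i" "\<lambda>i. b * y i"] by (simp add: V_scale linear_scale)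

lemma linear_diff: "x \<in> V n \<Longrightarrow> y \<in> V n \<Longrightarrow> T (\<lambda>i. x i - y i) = (\<lambda>i. T x i - T y i)"
  using linear_comb[of x y 1 "-1"] by simp

lemma linear_zero: "T (\<lambda>i. 0) = (\<lambda>i. 0)"
  using linear_scale[of "\<lambda>i. 0" 0] by (simp add: V_zero)

lemma linear_sum:
  "finite F \<Longrightarrow> (\<And>k. k \<in> F \<Longrightarrow> f k \<in> V n) \<Longrightarrow> T (\<lambda>i. \<Sum>k\<in>F. f k i) = (\<lambda>i. \<Sum>k\<in>F. T (f k) i)"
proof (induction F rule: finite_induct)
  case empty
  then show ?case using linear_zero by simp
next
  case (insert a F)
  then have "T (\<lambda>i. f a i + (\<Sum>k\<in>F. f k i)) = (\<lambda>i. T (f a) i + T (\<lambda>i. \<Sum>k\<in>F. f k i) i)"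
    by (intro linear_add V_sum) auto
  with insert show ?case by simp
qed

lemma seminorm_on_comp_linear: "seminorm_on n N \<Longrightarrow> seminorm_on n (\<lambda>x. N (T x))"
  unfolding seminorm_on_def by (auto simp: linear_add linear_scale linear_in_V)

lemma linear_on_inv_into:
  assumes bij: "bij_betw T (V n) (V n)"
  shows "linear_on n (inv_into (V n) T)"
proof -
  let ?S = "inv_into (V n) T"
  have S_in: "?S y \<in> V n" and TS: "T (?S y) = y" if "y \<in> V n" for y
    using bij that by (auto simp: bij_betw_def bij_betw_inv_into_right inv_into_into)
  have ST: "?S (T x) = x" if "x \<in> V n" for x
    using bij that by (simp add: bij_betw_def)
  show ?thesis
    unfolding linear_on_def
  proof (intro conjI ballI allI subsetI)
    fix x y assume "x \<in> V n" "y \<in> V n"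
    then show "?S (\<lambda>i. x i + y i) = (\<lambda>i. ?S x i + ?S y i)"
      using ST[OF V_add[OF S_in S_in]] by (simp add: linear_add S_in TS)
  next
    fix x c assume "x \<in> V n"
    then show "?S (\<lambda>i. c * x i) = (\<lambda>i. c * ?S x i)"
      using ST[OF V_scale[OF S_in]] by (simp add: linear_scale S_in TS)
  qed (use S_in in blast)
qed

end

lemma opnorm_bound:
  assumes N1: "is_norm_on n N1" and N2T: "seminorm_on n (\<lambda>x. N2 (T x))"
    and B: "\<And>x. x \<in> V n \<Longrightarrow> N2 (T x) \<le> B * N1 x"
  shows "0 \<le> opnorm n N1 N2 T" and "x \<in> V n \<Longrightarrow> N2 (T x) \<le> opnorm n N1 N2 T * N1 x"
proof -
  let ?X = "{N2 (T x) | x. x \<in> V n \<and> N1 x \<le> 1}"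
  have N1_nonneg: "x \<in> V n \<Longrightarrow> 0 \<le> N1 x" for x
    using N1 by (simp add: is_norm_on_def)
  have "bdd_above ?X"
  proof (rule bdd_aboveI)
    fix z assume "z \<in> ?X"
    then obtain x where "z = N2 (T x)" "x \<in> V n" "N1 x \<le> 1" by blast
    moreover have "B * N1 x \<le> \<bar>B\<bar>"
      using \<open>x \<in> V n\<close> \<open>N1 x \<le> 1\<close> N1_nonneg
      by (metis abs_ge_self abs_mult abs_of_nonneg mult.right_neutral mult_left_mono abs_ge_zero order_trans)
    ultimately show "z \<le> \<bar>B\<bar>" using B by force
  qed
  then have upper: "N2 (T x) \<le> opnorm n N1 N2 T" if "x \<in> V n" "N1 x \<le> 1" for x
    unfolding opnorm_def using that by (intro cSup_upper) auto
  show "0 \<le> opnorm n N1 N2 T"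
    using upper[OF V_zero] seminorm_zero[OF N2T] seminorm_zero[OF is_norm_on_imp_seminorm_on[OF N1]]
    by simp
  assume x: "x \<in> V n"
  show "N2 (T x) \<le> opnorm n N1 N2 T * N1 x"
  proof (cases "N1 x = 0")
    case True
    then have "x = (\<lambda>i. 0)"
      using N1 x by (simp add: is_norm_on_def)
    then show ?thesis
      using True seminorm_zero[OF N2T] by simp
  next
    case False
    then have pos: "0 < N1 x" using N1_nonneg[OF x] by simp
    have "N2 (T x) / N1 x = N2 (T (\<lambda>i. (1 / N1 x) * x i))"
      using seminorm_scale[OF N2T x, of "1 / N1 x"] pos by simp
    also have "\<dots> \<le> opnorm n N1 N2 T"
      using x pos seminorm_scale[OF is_norm_on_imp_seminorm_on[OF N1] x, of "1 / N1 x"]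
      by (intro upper V_scale) auto
    finally show ?thesis using pos by (simp add: divide_le_eq)
  qed
qed

lemma opnorm_linear:
  assumes T: "linear_on n T" and N1: "is_norm_on n N1" and N2: "seminorm_on n N2"
  shows "0 \<le> opnorm n N1 N2 T" and "x \<in> V n \<Longrightarrow> N2 (T x) \<le> opnorm n N1 N2 T * N1 x"
proof -
  have N2T: "seminorm_on n (\<lambda>x. N2 (T x))"
    using T N2 by (rule seminorm_on_comp_linear)
  obtain c where c: "0 < c" "\<And>x. x \<in> V n \<Longrightarrow> c * l1norm n x \<le> N1 x"
    using norm_ge_l1norm[OF N1] by blast
  define M where "M = (\<Sum>k<n. N2 (T (unit_vec k)))"
  have "M \<ge> 0"
    unfolding M_def by (intro sum_nonneg seminorm_nonneg[OF N2T] unit_vec_in_V) simp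
  have "N2 (T x) \<le> (M / c) * N1 x" if x: "x \<in> V n" for x
  proof -
    have "N2 (T x) \<le> M * l1norm n x"
      unfolding M_def using seminorm_le_l1norm[OF N2T x] .
    also have "\<dots> \<le> M * (N1 x / c)"
      using c x \<open>M \<ge> 0\<close> by (intro mult_left_mono) (auto simp: field_simps)
    finally show ?thesis by simp
  qed
  then show "0 \<le> opnorm n N1 N2 T" and "x \<in> V n \<Longrightarrow> N2 (T x) \<le> opnorm n N1 N2 T * N1 x"
    using opnorm_bound[of n N1 N2 T, OF N1 N2T] by blast+
qed

lemma opnorm_inverse_product_ge_1:
  assumes n: "0 < n" and N1: "is_norm_on n N1" and N2: "is_norm_on n N2"
    and T: "linear_on n T" and bij: "bij_betw T (V n) (V n)"
  shows "1 \<le> opnorm n N1 N2 T * opnorm n N2 N1 (inv_into (V n) T)"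
proof -
  let ?S = "inv_into (V n) T"
  note S = linear_on_inv_into[OF T bij]
  have e: "unit_vec 0 \<in> V n"
    using n by (rule unit_vec_in_V)
  have "unit_vec 0 \<noteq> (\<lambda>i. 0)"
    by (auto simp: unit_vec_def dest: fun_cong[of _ _ 0])
  then have pos: "0 < N1 (unit_vec 0)"
    using N1 e by (force simp: is_norm_on_def less_le)
  have "N1 (unit_vec 0) = N1 (?S (T (unit_vec 0)))"
    using bij e by (simp add: bij_betw_def)
  also have "\<dots> \<le> opnorm n N2 N1 ?S * N2 (T (unit_vec 0))"
    by (intro opnorm_linear(2)[OF S N2] is_norm_on_imp_seminorm_on N1 linear_in_V[OF T e])
  also have "\<dots> \<le> opnorm n N2 N1 ?S * (opnorm n N1 N2 T * N1 (unit_vec 0))"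
    by (intro mult_left_mono opnorm_linear[OF S N2] opnorm_linear[OF T N1] e
        is_norm_on_imp_seminorm_on N1 N2)
  finally show ?thesis
    using pos by (simp add: mult.commute)
qed

lemma bm_dist_l1_set_nonempty:
  "{opnorm n N (l1norm n) T * opnorm n (l1norm n) N (inv_into (V n) T) | T.
      linear_on n T \<and> bij_betw T (V n) (V n)} \<noteq> {}"
proof -
  have "linear_on n id" "bij_betw id (V n) (V n)"
    by (simp_all add: linear_on_def)
  then show ?thesis
    by blast
qed

lemma bm_dist_l1_ge_1:
  assumes n: "0 < n" and N: "is_norm_on n N"
  shows "1 \<le> bm_dist_l1 n N"
  unfolding bm_dist_l1_def
  using opnorm_inverse_product_ge_1[OF n N is_norm_on_l1norm]
  by (intro cInf_greatest bm_dist_l1_set_nonempty) blast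

lemma bm_dist_l1_witness:
  assumes n: "0 < n" and N: "is_norm_on n N" and \<theta>: "0 < \<theta>"
  obtains L where "linear_on n L" and "\<And>c. c \<in> V n \<Longrightarrow> N (L c) \<le> l1norm n c"
    and "\<And>c. c \<in> V n \<Longrightarrow> l1norm n c \<le> (bm_dist_l1 n N + \<theta>) * N (L c)"
proof -
  from cInf_lessD[OF bm_dist_l1_set_nonempty[of n N], of "bm_dist_l1 n N + \<theta>"] \<theta>
  obtain T where T: "linear_on n T" and bij: "bij_betw T (V n) (V n)"
    and near: "opnorm n N (l1norm n) T * opnorm n (l1norm n) N (inv_into (V n) T) < bm_dist_l1 n N + \<theta>"
    unfolding bm_dist_l1_def by auto
  let ?S = "inv_into (V n) T"
  define a where "a = opnorm n N (l1norm n) T"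
  define b where "b = opnorm n (l1norm n) N ?S"
  note S = linear_on_inv_into[OF T bij]
  have "1 \<le> a * b" "0 \<le> a" "0 \<le> b"
    unfolding a_def b_def
    using opnorm_inverse_product_ge_1[OF n N is_norm_on_l1norm T bij]
      opnorm_linear(1)[OF T N seminorm_on_l1norm] opnorm_linear(1)[OF S is_norm_on_l1norm]
      is_norm_on_imp_seminorm_on[OF N] by auto
  then have b: "0 < b"
    by (cases "b = 0") auto
  define L where "L = (\<lambda>c i. (1 / b) * ?S c i)"
  have L: "linear_on n L"
    unfolding linear_on_def L_def
    using linear_in_V[OF S]
    by (auto simp: linear_add[OF S] linear_scale[OF S] algebra_simps) (auto simp: V_def)
  have NL: "N (L c) = N (?S c) / b" if "c \<in> V n" for c
    using seminorm_scale[OF is_norm_on_imp_seminorm_on[OF N] linear_in_V[OF S that], of "1 / b"] b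
    by (simp add: L_def)
  show ?thesis
  proof (rule that[OF L])
    fix c assume c: "c \<in> V n"
    show "N (L c) \<le> l1norm n c"
      using opnorm_linear(2)[OF S is_norm_on_l1norm is_norm_on_imp_seminorm_on[OF N] c] b
      by (simp add: NL[OF c] b_def divide_le_eq mult.commute)
    have "l1norm n c = l1norm n (T (?S c))"
      using bij c by (simp add: bij_betw_inv_into_right)
    also have "\<dots> \<le> a * N (?S c)"
      unfolding a_def by (intro opnorm_linear(2)[OF T N seminorm_on_l1norm] linear_in_V[OF S c])
    also have "\<dots> = a * b * N (L c)"
      using b by (simp add: NL[OF c])
    also have "\<dots> \<le> (bm_dist_l1 n N + \<theta>) * N (L c)"
      using near seminorm_nonneg[OF is_norm_on_imp_seminorm_on[OF N] linear_in_V[OF L c]]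
      by (intro mult_right_mono) (simp_all add: a_def b_def)
    finally show "l1norm n c \<le> (bm_dist_l1 n N + \<theta>) * N (L c)" .
  qed
qed

section \<open>Entropy on the probability simplex\<close>

lemma mult_ln_ge_tangent:
  fixes x r :: real
  assumes x: "0 \<le> x" and r: "0 < r"
  shows "x * ln r + x - r \<le> x * ln x"
proof (cases "x = 0")
  case False
  with x have "0 < x" by simp
  then have "x * ln (r / x) \<le> x * (r / x - 1)"
    using r by (intro mult_left_mono ln_le_minus_one) auto
  with \<open>0 < x\<close> r show ?thesis
    by (simp add: ln_div algebra_simps)
qed (use r in simp)

lemma neg_mult_ln_add_le:
  fixes x y :: real
  assumes "0 \<le> x" "0 \<le> y"
  shows "- (x + y) * ln (x + y) \<le> - x * ln x - y * ln y"
proof -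
  have mono: "z * ln z \<le> z * ln (x + y)" if "0 \<le> z" "z \<le> x + y" for z
    using that by (cases "z = 0") (auto intro: mult_left_mono)
  show ?thesis
    using mono[of x] mono[of y] assms by (simp add: algebra_simps)
qed

lemma neg_mult_ln_mult:
  fixes t a :: real
  assumes "0 \<le> t" "0 \<le> a"
  shows "- (t * a) * ln (t * a) = t * (- a * ln a) - a * (t * ln t)"
  using assms by (cases "t = 0 \<or> a = 0") (auto simp: ln_mult algebra_simps)

lemma binary_entropy_le_ln2:
  fixes t :: real
  assumes "0 \<le> t" "t \<le> 1"
  shows "- t * ln t - (1 - t) * ln (1 - t) \<le> ln 2"
  using mult_ln_ge_tangent[of t "1/2"] mult_ln_ge_tangent[of "1 - t" "1/2"] assms
  by (simp add: ln_div algebra_simps)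

lemma mult_ln_le_near_1:
  fixes x m :: real
  assumes x: "0 \<le> x" "x \<le> m" and m: "1 \<le> m"
  shows "x * ln x \<le> (x - 1) + \<bar>x - 1\<bar> * (ln m + 1)"
proof (cases "1 \<le> x")
  case True
  have "x * ln x = ln x + (x - 1) * ln x"
    by (simp add: algebra_simps)
  also have "\<dots> \<le> (x - 1) + (x - 1) * ln m"
    using True x by (intro add_mono mult_left_mono ln_le_minus_one) auto
  also have "\<dots> \<le> (x - 1) + \<bar>x - 1\<bar> * (ln m + 1)"
    using True by (simp add: distrib_left)
  finally show ?thesis .
next
  case False
  then have "x * ln x \<le> 0"
    using x by (cases "x = 0") (auto intro: mult_nonneg_nonpos)
  also have "0 \<le> (x - 1) + \<bar>x - 1\<bar> * (ln m + 1)"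
    using False m x mult_left_le_one_le[of "ln m" x] by (simp add: algebra_simps)
  finally show ?thesis .
qed

lemma mult_ln_convex:
  fixes a b t :: real
  assumes ab: "0 \<le> a" "0 \<le> b" and t: "0 \<le> t" "t \<le> 1"
  shows "(t * a + (1 - t) * b) * ln (t * a + (1 - t) * b) \<le> t * (a * ln a) + (1 - t) * (b * ln b)"
proof -
  define r where "r = t * a + (1 - t) * b"
  have ta: "0 \<le> t * a" and tb: "0 \<le> (1 - t) * b"
    using ab t by simp_all
  show ?thesis
  proof (cases "r = 0")
    case True
    then have "t * a = 0" "(1 - t) * b = 0"
      using ta tb unfolding r_def by linarith+
    then show ?thesis by auto
  next
    case False
    then have r: "0 < r"
      using ta tb by (simp add: r_def)
    have "r * ln r = t * (a * ln r + a - r) + (1 - t) * (b * ln r + b - r)"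
      by (simp add: r_def algebra_simps)
    also have "\<dots> \<le> t * (a * ln a) + (1 - t) * (b * ln b)"
      using t by (intro add_mono mult_left_mono mult_ln_ge_tangent ab r) simp_all
    finally show ?thesis
      by (simp add: r_def)
  qed
qed

definition prob_simplex :: "nat \<Rightarrow> (nat \<Rightarrow> real) set" where
  "prob_simplex m = {p \<in> V m. (\<forall>i. 0 \<le> p i) \<and> (\<Sum>i<m. p i) = 1}"

definition uniform :: "nat \<Rightarrow> nat \<Rightarrow> real" where
  "uniform m = (\<lambda>i. if i < m then 1 / m else 0)"

definition entropy :: "nat \<Rightarrow> (nat \<Rightarrow> real) \<Rightarrow> real" where
  "entropy m p = (\<Sum>i<m. - p i * log 2 (p i))"

lemma prob_simplex_in_V: "p \<in> prob_simplex m \<Longrightarrow> p \<in> V m"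
  and prob_simplex_nonneg: "p \<in> prob_simplex m \<Longrightarrow> 0 \<le> p i"
  and prob_simplex_sum: "p \<in> prob_simplex m \<Longrightarrow> (\<Sum>i<m. p i) = 1"
  by (simp_all add: prob_simplex_def)

lemma prob_simplex_le_1: "p \<in> prob_simplex m \<Longrightarrow> p i \<le> 1"
  by (cases "i < m")
    (auto simp: prob_simplex_def V_def intro: order_trans[OF member_le_sum[of i "{..<m}" p]])

lemma l1norm_prob_simplex: "p \<in> prob_simplex m \<Longrightarrow> l1norm m p = 1"
  by (simp add: prob_simplex_def l1norm_def)

lemma prob_simplex_mix:
  "p \<in> prob_simplex m \<Longrightarrow> q \<in> prob_simplex m \<Longrightarrow> 0 \<le> t \<Longrightarrow> t \<le> 1 \<Longrightarrow>
    (\<lambda>i. t * p i + (1 - t) * q i) \<in> prob_simplex m"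
  unfolding prob_simplex_def V_def by (auto simp: sum.distrib sum_distrib_left[symmetric])

lemma unit_vec_in_prob_simplex: "k < m \<Longrightarrow> unit_vec k \<in> prob_simplex m"
  by (simp add: prob_simplex_def unit_vec_in_V) (simp add: unit_vec_def)

lemma uniform_in_V: "uniform m \<in> V m"
  by (simp add: uniform_def V_def)

lemma uniform_eq_sum: "uniform m = (\<lambda>i. \<Sum>k<m. (1 / m) * unit_vec k i)"
  by (auto simp: uniform_def unit_vec_def if_distrib sum.delta cong: if_cong)

lemma entropy_eq_ln: "entropy m p = (\<Sum>i<m. - p i * ln (p i)) / ln 2"
  by (simp add: entropy_def log_def sum_divide_distrib)

lemma entropy_unit_vec: "entropy m (unit_vec k) = 0"
  unfolding entropy_def unit_vec_def by (rule sum.neutral) simp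

lemma entropy_nonneg:
  assumes p: "p \<in> prob_simplex m"
  shows "0 \<le> entropy m p"
proof -
  have "0 \<le> - p i * ln (p i)" for i
    using prob_simplex_nonneg[OF p, of i] prob_simplex_le_1[OF p, of i]
    by (cases "p i = 0") (auto intro: mult_nonneg_nonpos)
  then show ?thesis
    unfolding entropy_eq_ln by (intro divide_nonneg_pos sum_nonneg) auto
qed

lemma entropy_le_log:
  assumes p: "p \<in> prob_simplex m" and m: "0 < m"
  shows "entropy m p \<le> log 2 m"
proof -
  have "- p i * ln (p i) \<le> p i * ln m + 1 / m - p i" for i
    using mult_ln_ge_tangent[OF prob_simplex_nonneg[OF p], of "1 / m" i] m by (simp add: ln_div)
  then have "(\<Sum>i<m. - p i * ln (p i)) \<le> (\<Sum>i<m. p i * ln m + 1 / m - p i)"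
    by (intro sum_mono)
  also have "\<dots> = ln m"
    using m prob_simplex_sum[OF p] by (simp add: sum.distrib sum_subtractf sum_distrib_right[symmetric])
  finally show ?thesis
    unfolding entropy_eq_ln log_def by (simp add: divide_right_mono)
qed

lemma entropy_concave:
  assumes p: "p \<in> prob_simplex m" and q: "q \<in> prob_simplex m" and t: "0 \<le> t" "t \<le> 1"
  shows "t * entropy m p + (1 - t) * entropy m q \<le> entropy m (\<lambda>i. t * p i + (1 - t) * q i)"
proof -
  have "t * (- p i * ln (p i)) + (1 - t) * (- q i * ln (q i))
      \<le> - (t * p i + (1 - t) * q i) * ln (t * p i + (1 - t) * q i)" for i
    using mult_ln_convex[OF prob_simplex_nonneg[OF p, of i] prob_simplex_nonneg[OF q, of i] t] by linarith
  then have "(\<Sum>i<m. t * (- p i * ln (p i)) + (1 - t) * (- q i * ln (q i)))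
      \<le> (\<Sum>i<m. - (t * p i + (1 - t) * q i) * ln (t * p i + (1 - t) * q i))"
    by (intro sum_mono)
  then have "t * (\<Sum>i<m. - p i * ln (p i)) + (1 - t) * (\<Sum>i<m. - q i * ln (q i))
      \<le> (\<Sum>i<m. - (t * p i + (1 - t) * q i) * ln (t * p i + (1 - t) * q i))"
    by (simp only: sum.distrib sum_distrib_left)
  then show ?thesis
    unfolding entropy_eq_ln times_divide_eq_right add_divide_distrib[symmetric]
    by (rule divide_right_mono) simp
qed

lemma entropy_mix_le:
  assumes p: "p \<in> prob_simplex m" and q: "q \<in> prob_simplex m" and t: "0 \<le> t" "t \<le> 1"
  shows "entropy m (\<lambda>i. t * p i + (1 - t) * q i) \<le> t * entropy m p + (1 - t) * entropy m q + 1"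
proof -
  have "- (t * p i + (1 - t) * q i) * ln (t * p i + (1 - t) * q i)
      \<le> (t * (- p i * ln (p i)) - p i * (t * ln t))
        + ((1 - t) * (- q i * ln (q i)) - q i * ((1 - t) * ln (1 - t)))" for i
  proof -
    have nonneg: "0 \<le> t * p i" "0 \<le> (1 - t) * q i"
      using t prob_simplex_nonneg[OF p] prob_simplex_nonneg[OF q] by simp_all
    show ?thesis
      using neg_mult_ln_add_le[OF nonneg] neg_mult_ln_mult[of t "p i"] neg_mult_ln_mult[of "1 - t" "q i"]
        t prob_simplex_nonneg[OF p] prob_simplex_nonneg[OF q] by simp
  qed
  then have "(\<Sum>i<m. - (t * p i + (1 - t) * q i) * ln (t * p i + (1 - t) * q i))
      \<le> (\<Sum>i<m. (t * (- p i * ln (p i)) - p i * (t * ln t))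
                + ((1 - t) * (- q i * ln (q i)) - q i * ((1 - t) * ln (1 - t))))"
    by (intro sum_mono)
  also have "\<dots> = t * (\<Sum>i<m. - p i * ln (p i)) - t * ln t
      + ((1 - t) * (\<Sum>i<m. - q i * ln (q i)) - (1 - t) * ln (1 - t))"
    using prob_simplex_sum[OF p] prob_simplex_sum[OF q]
    by (simp only: sum.distrib sum_subtractf sum_distrib_left[symmetric] sum_distrib_right[symmetric]
        mult_1)
  also have "\<dots> \<le> t * (\<Sum>i<m. - p i * ln (p i)) + (1 - t) * (\<Sum>i<m. - q i * ln (q i)) + ln 2"
    using binary_entropy_le_ln2[OF t] by (simp add: algebra_simps)
  finally show ?thesis
    unfolding entropy_eq_ln using ln_gt_zero[of "2::real"] by (simp add: field_simps)
qed

lemma entropy_near_uniform: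
  assumes p: "p \<in> prob_simplex m" and m: "0 < m"
  shows "log 2 m - entropy m p \<le> (log 2 m + 2) * l1norm m (\<lambda>i. uniform m i - p i)"
proof -
  define \<delta> where "\<delta> = l1norm m (\<lambda>i. uniform m i - p i)"
  have \<delta>: "\<delta> = (\<Sum>i<m. \<bar>m * p i - 1\<bar>) / m"
    using m by (simp add: \<delta>_def l1norm_def uniform_def sum_divide_distrib abs_minus_commute field_simps)
  have scaled: "p i * ln m + p i * ln (p i) = (m * p i) * ln (m * p i) / m" for i
    using m prob_simplex_nonneg[OF p, of i] by (cases "p i = 0") (auto simp: ln_mult field_simps)
  have "ln m - (\<Sum>i<m. - p i * ln (p i)) = (\<Sum>i<m. p i * ln m + p i * ln (p i))"
    using prob_simplex_sum[OF p] by (simp add: sum.distrib sum_distrib_right[symmetric] sum_negf)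
  also have "\<dots> = (\<Sum>i<m. (m * p i) * ln (m * p i)) / m"
    unfolding scaled sum_divide_distrib ..
  also have "\<dots> \<le> (\<Sum>i<m. (m * p i - 1) + \<bar>m * p i - 1\<bar> * (ln m + 1)) / m"
    using m prob_simplex_nonneg[OF p] prob_simplex_le_1[OF p]
    by (intro divide_right_mono sum_mono mult_ln_le_near_1) auto
  also have "\<dots> = (ln m + 1) * \<delta>"
    using m prob_simplex_sum[OF p]
    by (simp add: \<delta> sum.distrib sum_subtractf sum_distrib_left[symmetric] sum_distrib_right[symmetric])
  finally have ln_bound: "ln m - (\<Sum>i<m. - p i * ln (p i)) \<le> (ln m + 1) * \<delta>" .
  have "log 2 m - entropy m p = (ln m - (\<Sum>i<m. - p i * ln (p i))) / ln 2"
    unfolding entropy_eq_ln log_def by (simp add: diff_divide_distrib)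
  also have "\<dots> \<le> (ln m + 1) * \<delta> / ln 2"
    using ln_bound by (simp add: divide_right_mono)
  also have "\<dots> = (log 2 m + 1 / ln 2) * \<delta>"
    by (simp add: log_def field_simps)
  also have "\<dots> \<le> (log 2 m + 2) * \<delta>"
    using ln2_ge_two_thirds by (intro mult_right_mono) (simp_all add: \<delta>_def l1norm_nonneg field_simps)
  finally show ?thesis
    unfolding \<delta>_def .
qed

lemma setdist_N_le:
  assumes N: "seminorm_on n N" and z: "z \<in> V n" and A: "A \<subseteq> V n"
    and a: "a \<in> A" and le: "N (\<lambda>i. z i - a i) \<le> \<delta>"
  shows "setdist_N N z A \<le> \<delta>"
  unfolding setdist_N_def
proof (rule cInf_lower2)
  show "bdd_below {N (\<lambda>i. z i - a i) |a. a \<in> A}"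
    using A z by (intro bdd_belowI[of _ 0]) (auto intro: seminorm_nonneg[OF N] V_diff)
qed (use a le in auto)

lemma hausdorff_N_ge:
  assumes z: "z \<in> B" and h: "\<And>a. a \<in> A \<Longrightarrow> h \<le> N (\<lambda>i. z i - a i)"
  shows "ereal h \<le> hausdorff_N N A B"
proof -
  have "ereal h \<le> esetdist_N N z A"
    unfolding esetdist_N_def by (rule INF_greatest) (simp add: h)
  also have "\<dots> \<le> (SUP b\<in>B. esetdist_N N b A)"
    using z by (rule SUP_upper)
  also have "\<dots> \<le> hausdorff_N N A B"
    unfolding hausdorff_N_def by simp
  finally show ?thesis .
qed

lemma diam_N_le:
  assumes "\<And>a b. a \<in> A \<Longrightarrow> b \<in> A \<Longrightarrow> N (\<lambda>i. a i - b i) \<le> \<delta>"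
  shows "diam_N N A \<le> ereal \<delta>"
  unfolding diam_N_def using assms by (intro SUP_least) auto

lemma conv_hull_indexed_comb:
  assumes I: "finite I" "I \<noteq> {}" and f: "\<And>i. i \<in> I \<Longrightarrow> f i \<in> A"
    and w: "\<And>i. i \<in> I \<Longrightarrow> 0 \<le> w i" "sum w I = 1"
  shows "(\<lambda>j. \<Sum>i\<in>I. w i * f i j) \<in> conv_hull A"
proof -
  define c where "c x = (\<Sum>i\<in>{i\<in>I. f i = x}. w i)" for x
  have "(\<Sum>i\<in>I. w i * f i j) = (\<Sum>x\<in>f ` I. c x * x j)" for j
  proof -
    have "(\<Sum>i\<in>I. w i * f i j) = (\<Sum>x\<in>f ` I. \<Sum>i\<in>{i\<in>I. f i = x}. w i * f i j)"
      using I(1) by (rule sum.image_gen)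
    also have "\<dots> = (\<Sum>x\<in>f ` I. c x * x j)"
      unfolding c_def sum_distrib_right by (intro sum.cong) auto
    finally show ?thesis .
  qed
  moreover have "sum c (f ` I) = 1"
    using sum.image_gen[OF I(1), of w f] w(2) by (simp add: c_def)
  moreover have "\<forall>x\<in>f ` I. 0 \<le> c x"
    using w(1) by (auto simp: c_def intro: sum_nonneg)
  ultimately show ?thesis
    unfolding conv_hull_def using I f by (intro CollectI exI[of _ "f ` I"] exI[of _ c] conjI) auto
qed

section \<open>An almost orthogonal direction\<close>

text \<open>Normalise a near-minimiser of \<open>N\<close> on the affine hyperplane \<open>L (e\<^sub>m + V m)\<close>,
  on which \<open>N\<close> is at least \<open>1 / D\<close>.\<close>

lemma almost_orthogonal_unit_vector:
  assumes N: "seminorm_on n N" and m: "m < n" and L: "linear_on n L"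
    and L_ge: "\<And>c. c \<in> V n \<Longrightarrow> l1norm n c \<le> D * N (L c)" and D: "0 < D" and \<eta>: "0 < \<eta>"
  obtains y where "y \<in> V n" and "N y = 1"
    and "\<And>w s. w \<in> V m \<Longrightarrow> \<bar>s\<bar> \<le> (1 + \<eta>) * N (\<lambda>i. s * y i + L w i)"
proof -
  let ?e = "unit_vec m"
  have V_mn: "w \<in> V m \<Longrightarrow> w \<in> V n" for w
    using m V_mono[of m n w] by simp
  have e_w: "(\<lambda>i. ?e i + w i) \<in> V n" if "w \<in> V m" for w
    using m that by (intro V_add unit_vec_in_V V_mn)
  define X where "X = {N (L (\<lambda>i. ?e i + w i)) | w. w \<in> V m}"
  have X_ge: "1 / D \<le> x" if "x \<in> X" for x
  proof -
    obtain w where w: "w \<in> V m" and x: "x = N (L (\<lambda>i. ?e i + w i))"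
      using \<open>x \<in> X\<close> by (auto simp: X_def)
    have "1 = \<bar>?e m + w m\<bar>"
      using w by (simp add: unit_vec_def V_def)
    also have "\<dots> \<le> l1norm n (\<lambda>i. ?e i + w i)"
      using m by (rule abs_le_l1norm)
    also have "\<dots> \<le> D * x"
      unfolding x using w by (intro L_ge e_w)
    finally show ?thesis
      using D by (simp add: field_simps)
  qed
  have X_ne: "X \<noteq> {}"
    using V_zero unfolding X_def by blast
  define \<rho> where "\<rho> = Inf X"
  have \<rho>: "0 < \<rho>"
    using X_ge X_ne D unfolding \<rho>_def by (meson cInf_greatest less_le_trans zero_less_divide_1_iff)
  have \<rho>_le: "\<rho> \<le> N (L (\<lambda>i. ?e i + w i))" if "w \<in> V m" for w
    unfolding \<rho>_def X_def using that X_ge by (intro cInf_lower bdd_belowI) (auto simp: X_def)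
  have "Inf X < (1 + \<eta>) * \<rho>"
    using \<rho> \<eta> by (simp add: \<rho>_def)
  then obtain w0 where w0: "w0 \<in> V m" and \<nu>_lt: "N (L (\<lambda>i. ?e i + w0 i)) < (1 + \<eta>) * \<rho>"
    using cInf_lessD[OF X_ne] by (auto simp: X_def)
  define y0 where "y0 = L (\<lambda>i. ?e i + w0 i)"
  define \<nu> where "\<nu> = N y0"
  have y0: "y0 \<in> V n"
    unfolding y0_def using w0 by (intro linear_in_V[OF L] e_w)
  have \<nu>: "0 < \<nu>"
    using \<rho>_le[OF w0] \<rho> by (simp add: \<nu>_def y0_def)
  define y where "y = (\<lambda>i. (1 / \<nu>) * y0 i)"
  have orth: "\<bar>s\<bar> \<le> (1 + \<eta>) * N (\<lambda>i. s * y i + L w i)" if w: "w \<in> V m" for w s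
  proof (cases "s = 0")
    case True
    then show ?thesis
      using seminorm_nonneg[OF N linear_in_V[OF L V_mn[OF w]]] \<eta> by simp
  next
    case False
    define w' where "w' = (\<lambda>i. w0 i + (\<nu> / s) * w i)"
    have w': "w' \<in> V m"
      unfolding w'_def using w0 w by (intro V_add V_scale)
    have "L (\<lambda>i. ?e i + w' i) = (\<lambda>i. y0 i + (\<nu> / s) * L w i)"
      using linear_add[OF L e_w[OF w0] V_scale[OF V_mn[OF w], of "\<nu> / s"]]
        linear_scale[OF L V_mn[OF w], of "\<nu> / s"]
      by (simp add: w'_def y0_def add.assoc)
    then have "(\<lambda>i. s * y i + L w i) = (\<lambda>i. (s / \<nu>) * L (\<lambda>i. ?e i + w' i) i)"
      using False \<nu> by (auto simp: y_def field_simps)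
    then have "N (\<lambda>i. s * y i + L w i) = \<bar>s\<bar> / \<nu> * N (L (\<lambda>i. ?e i + w' i))"
      using seminorm_scale[OF N linear_in_V[OF L e_w[OF w']], of "s / \<nu>"] \<nu> by (simp add: abs_div)
    moreover have "\<bar>s\<bar> \<le> (1 + \<eta>) * (\<bar>s\<bar> / \<nu> * \<rho>)"
      using \<nu>_lt \<nu> mult_left_mono[of \<nu> "(1 + \<eta>) * \<rho>" "\<bar>s\<bar>"]
      by (simp add: \<nu>_def y0_def field_simps)
    ultimately show ?thesis
      using \<rho>_le[OF w'] \<nu> \<eta>
      by (smt (verit) divide_nonneg_pos mult_left_mono abs_ge_zero)
  qed
  show ?thesis
  proof (rule that)
    show "y \<in> V n"
      unfolding y_def using y0 by (rule V_scale)
    show "N y = 1"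
      using seminorm_scale[OF N y0, of "1 / \<nu>"] \<nu> by (simp add: y_def \<nu>_def)
  qed (rule orth)
qed

section \<open>The lifted entropy graph\<close>

locale entropy_graph =
  fixes n m :: nat and N L :: "(nat \<Rightarrow> real) \<Rightarrow> _" and y :: "nat \<Rightarrow> real" and D S \<eta> :: real
  assumes seminorm: "seminorm_on n N"
    and m: "0 < m" "m \<le> n"
    and linear: "linear_on n L"
    and L_le: "\<And>c. c \<in> V n \<Longrightarrow> N (L c) \<le> l1norm n c"
    and L_ge: "\<And>c. c \<in> V n \<Longrightarrow> l1norm n c \<le> D * N (L c)"
    and D: "0 < D" and S: "0 \<le> S" and \<eta>: "0 \<le> \<eta>"
    and y: "y \<in> V n" "N y = 1"
    and orthogonal: "\<And>w s. w \<in> V m \<Longrightarrow> \<bar>s\<bar> \<le> (1 + \<eta>) * N (\<lambda>i. s * y i + L w i)"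
begin

definition point :: "(nat \<Rightarrow> real) \<Rightarrow> nat \<Rightarrow> real" where
  "point p = (\<lambda>i. S * L p i - entropy m p * y i)"

definition graph :: "(nat \<Rightarrow> real) set" where
  "graph = point ` prob_simplex m"

definition barycentre :: "nat \<Rightarrow> real" where
  "barycentre = (\<lambda>i. S * L (uniform m) i)"

lemma V_m_subset: "x \<in> V m \<Longrightarrow> x \<in> V n"
  using m(2) by (rule V_mono)

lemma prob_simplex_in_V_n: "p \<in> prob_simplex m \<Longrightarrow> p \<in> V n"
  by (intro V_m_subset prob_simplex_in_V)

lemma point_in_V: "p \<in> prob_simplex m \<Longrightarrow> point p \<in> V n"
  unfolding point_def using y(1) prob_simplex_in_V_n by (simp add: V_diff V_scale linear_in_V[OF linear])

lemma graph_subset_V: "graph \<subseteq> V n"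
  using point_in_V by (auto simp: graph_def)

lemma entropy_bounds: "p \<in> prob_simplex m \<Longrightarrow> 0 \<le> entropy m p \<and> entropy m p \<le> log 2 m"
  using entropy_nonneg entropy_le_log m(1) by blast

text \<open>A chord between two points of the graph differs from a point of the graph by the
  concavity defect of the entropy times \<open>y\<close>, and that defect lies in \<open>[0, 1]\<close>.\<close>

lemma approx_convex_graph: "approx_convex N graph"
  unfolding approx_convex_def graph_def
proof (intro ballI allI impI)
  fix a b and t :: real assume "a \<in> point ` prob_simplex m" "b \<in> point ` prob_simplex m" and t: "0 \<le> t \<and> t \<le> 1"
  then obtain p q where p: "p \<in> prob_simplex m" "a = point p" and q: "q \<in> prob_simplex m" "b = point q"
    by blast
  define r where "r = (\<lambda>i. t * p i + (1 - t) * q i)"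
  have r: "r \<in> prob_simplex m"
    unfolding r_def using p q t by (intro prob_simplex_mix) auto
  define \<delta> where "\<delta> = entropy m r - (t * entropy m p + (1 - t) * entropy m q)"
  have "0 \<le> \<delta>" "\<delta> \<le> 1"
    using entropy_concave[OF p(1) q(1), of t] entropy_mix_le[OF p(1) q(1), of t] t
    unfolding \<delta>_def r_def by linarith+
  have "L r = (\<lambda>i. t * L p i + (1 - t) * L q i)"
    unfolding r_def using linear_comb[OF linear] prob_simplex_in_V_n p q by blast
  then have "(\<lambda>i. (t * a i + (1 - t) * b i) - point r i) = (\<lambda>i. \<delta> * y i)"
    by (auto simp: p q point_def \<delta>_def algebra_simps)
  then have "N (\<lambda>i. (t * a i + (1 - t) * b i) - point r i) \<le> 1"
    using seminorm_scale[OF seminorm y(1)] y(2) \<open>0 \<le> \<delta>\<close> \<open>\<delta> \<le> 1\<close> by simp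
  moreover have "(\<lambda>i. t * a i + (1 - t) * b i) \<in> V n"
    using p q point_in_V by (intro V_add V_scale) auto
  ultimately show "setdist_N N (\<lambda>i. t * a i + (1 - t) * b i) (point ` prob_simplex m) \<le> 1"
    using r point_in_V by (intro setdist_N_le[OF seminorm]) auto
qed

lemma barycentre_in_conv_hull: "barycentre \<in> conv_hull graph"
proof -
  have e: "unit_vec k \<in> V n" if "k < m" for k
    using that m(2) by (intro unit_vec_in_V) simp
  have "L (uniform m) = (\<lambda>i. \<Sum>k<m. L (\<lambda>j. (1 / m) * unit_vec k j) i)"
    unfolding uniform_eq_sum using e by (intro linear_sum[OF linear] V_scale) auto
  also have "\<dots> = (\<lambda>i. \<Sum>k<m. (1 / m) * L (unit_vec k) i)"
  proof (intro ext sum.cong refl)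
    fix i k assume "k \<in> {..<m}"
    then show "L (\<lambda>j. (1 / m) * unit_vec k j) i = (1 / m) * L (unit_vec k) i"
      using linear_scale[OF linear e, of k "1 / m"] by simp
  qed
  finally have "barycentre = (\<lambda>i. \<Sum>k<m. (1 / m) * point (unit_vec k) i)"
    by (simp add: barycentre_def point_def entropy_unit_vec sum_distrib_left algebra_simps)
  also have "\<dots> \<in> conv_hull graph"
    using m(1) unit_vec_in_prob_simplex by (intro conv_hull_indexed_comb) (auto simp: graph_def)
  finally show ?thesis .
qed

lemma barycentre_minus_point:
  assumes p: "p \<in> prob_simplex m"
  shows "(\<lambda>i. barycentre i - point p i) = (\<lambda>i. entropy m p * y i + L (\<lambda>i. S * (uniform m i - p i)) i)"
proof -
  have "uniform m \<in> V n"
    by (intro V_m_subset uniform_in_V)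
  then have "L (\<lambda>i. S * (uniform m i - p i)) = (\<lambda>i. S * (L (uniform m) i - L p i))"
    using prob_simplex_in_V_n[OF p] by (simp add: V_diff linear_scale[OF linear] linear_diff[OF linear])
  then show ?thesis
    by (auto simp: barycentre_def point_def algebra_simps)
qed

lemma uniform_minus_in_V: "p \<in> prob_simplex m \<Longrightarrow> (\<lambda>i. S * (uniform m i - p i)) \<in> V m"
  by (intro V_scale V_diff uniform_in_V prob_simplex_in_V)

lemma dist_barycentre_ge_entropy:
  assumes p: "p \<in> prob_simplex m"
  shows "entropy m p / (1 + \<eta>) \<le> N (\<lambda>i. barycentre i - point p i)"
proof -
  have "\<bar>entropy m p\<bar> \<le> (1 + \<eta>) * N (\<lambda>i. barycentre i - point p i)"
    unfolding barycentre_minus_point[OF p] by (intro orthogonal uniform_minus_in_V p)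
  then show ?thesis
    using \<eta> by (simp add: field_simps)
qed

lemma dist_barycentre_ge_spread:
  assumes p: "p \<in> prob_simplex m"
  shows "S * l1norm m (\<lambda>i. uniform m i - p i) / D - entropy m p \<le> N (\<lambda>i. barycentre i - point p i)"
proof -
  have w: "(\<lambda>i. S * (uniform m i - p i)) \<in> V n"
    by (intro V_m_subset uniform_minus_in_V p)
  have "S * l1norm m (\<lambda>i. uniform m i - p i) = l1norm n (\<lambda>i. S * (uniform m i - p i))"
    using seminorm_scale[OF seminorm_on_l1norm, of "\<lambda>i. uniform m i - p i" m S] S m(2)
      l1norm_V_mono[OF m(2) uniform_minus_in_V[OF p]] uniform_in_V prob_simplex_in_V[OF p]
    by (simp add: V_diff)
  also have "\<dots> \<le> D * N (L (\<lambda>i. S * (uniform m i - p i)))"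
    using w by (rule L_ge)
  finally have "S * l1norm m (\<lambda>i. uniform m i - p i) / D \<le> N (L (\<lambda>i. S * (uniform m i - p i)))"
    using D by (simp add: divide_le_eq mult.commute)
  moreover have "N (L (\<lambda>i. S * (uniform m i - p i))) - entropy m p \<le> N (\<lambda>i. barycentre i - point p i)"
    using seminorm_reverse_triangle[OF seminorm linear_in_V[OF linear w] V_scale[OF y(1)], of "entropy m p"]
      seminorm_scale[OF seminorm y(1)] y(2) entropy_bounds[OF p]
    by (simp add: barycentre_minus_point[OF p] add.commute)
  ultimately show ?thesis
    by linarith
qed

lemma dist_barycentre_ge:
  assumes a: "a \<in> graph" and r: "0 < r"
  shows "min (S * r / D - log 2 m) ((log 2 m - (log 2 m + 2) * r) / (1 + \<eta>))
    \<le> N (\<lambda>i. barycentre i - a i)"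
proof -
  obtain p where p: "p \<in> prob_simplex m" and a: "a = point p"
    using a by (auto simp: graph_def)
  show ?thesis
  proof (cases "r \<le> l1norm m (\<lambda>i. uniform m i - p i)")
    case True
    then have "S * r / D \<le> S * l1norm m (\<lambda>i. uniform m i - p i) / D"
      using S D by (intro divide_right_mono mult_left_mono) auto
    then show ?thesis
      using dist_barycentre_ge_spread[OF p] entropy_bounds[OF p] unfolding a by linarith
  next
    case False
    have "0 \<le> log 2 m + 2"
      using m(1) by simp
    then have "log 2 m - (log 2 m + 2) * r
        \<le> log 2 m - (log 2 m + 2) * l1norm m (\<lambda>i. uniform m i - p i)"
      using False by (intro diff_left_mono mult_left_mono) auto
    also have "\<dots> \<le> entropy m p"
      using entropy_near_uniform[OF p m(1)] by linarith
    finally have "(log 2 m - (log 2 m + 2) * r) / (1 + \<eta>) \<le> entropy m p / (1 + \<eta>)"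
      using \<eta> by (intro divide_right_mono) auto
    then show ?thesis
      using dist_barycentre_ge_entropy[OF p] unfolding a by linarith
  qed
qed

lemma graph_dist_le:
  assumes "a \<in> graph" and "b \<in> graph"
  shows "N (\<lambda>i. a i - b i) \<le> 2 * S + log 2 m"
proof -
  obtain p q where p: "p \<in> prob_simplex m" "a = point p" and q: "q \<in> prob_simplex m" "b = point q"
    using assms by (auto simp: graph_def)
  have pq: "(\<lambda>i. p i - q i) \<in> V n"
    using p q by (intro V_diff prob_simplex_in_V_n) auto
  have "(\<lambda>i. a i - b i) = (\<lambda>i. L (\<lambda>i. S * (p i - q i)) i + (entropy m q - entropy m p) * y i)"
    using linear_scale[OF linear pq, of S] linear_diff[OF linear] prob_simplex_in_V_n[OF p(1)] prob_simplex_in_V_n[OF q(1)]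
    by (auto simp: p q point_def algebra_simps)
  then have "N (\<lambda>i. a i - b i) \<le> N (L (\<lambda>i. S * (p i - q i))) + \<bar>entropy m q - entropy m p\<bar>"
    using seminorm_triangle[OF seminorm linear_in_V[OF linear V_scale[OF pq]] V_scale[OF y(1)]]
      seminorm_scale[OF seminorm y(1)] y(2) by simp
  also have "N (L (\<lambda>i. S * (p i - q i))) \<le> S * l1norm n (\<lambda>i. p i - q i)"
    using L_le[OF V_scale[OF pq, of S]] seminorm_scale[OF seminorm_on_l1norm pq, of S] S by simp
  also have "l1norm n (\<lambda>i. p i - q i) \<le> 2"
    using seminorm_triangle_diff[OF seminorm_on_l1norm prob_simplex_in_V_n[OF p(1)] prob_simplex_in_V_n[OF q(1)]]
      l1norm_V_mono[OF m(2)] l1norm_prob_simplex p(1) q(1) prob_simplex_in_V by simp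
  also have "\<bar>entropy m q - entropy m p\<bar> \<le> log 2 m"
    using entropy_bounds[OF p(1)] entropy_bounds[OF q(1)] by linarith
  finally show ?thesis
    using S by (simp add: mult_left_mono)
qed

end

lemma approx_convex_set_exists:
  assumes N: "is_norm_on n N" and n: "2 \<le> n"
    and \<theta>: "0 < \<theta>" and r: "0 < r" and S: "0 \<le> S" and \<eta>: "0 < \<eta>"
  defines "D \<equiv> bm_dist_l1 n N + \<theta>" and "k \<equiv> log 2 (real (n - 1))"
  shows "\<exists>A\<subseteq>V n. approx_convex N A \<and>
    ereal (min (S * r / D - k) ((k - (k + 2) * r) / (1 + \<eta>))) \<le> hausdorff_N N A (conv_hull A) \<and>
    diam_N N A \<le> ereal (2 * S + k)"
proof -
  have n0: "0 < n"
    using n by simp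
  have D: "0 < D"
    unfolding D_def using bm_dist_l1_ge_1[OF n0 N] \<theta> by simp
  obtain L where L: "linear_on n L" and L_le: "\<And>c. c \<in> V n \<Longrightarrow> N (L c) \<le> l1norm n c"
    and L_ge: "\<And>c. c \<in> V n \<Longrightarrow> l1norm n c \<le> D * N (L c)"
    using bm_dist_l1_witness[OF n0 N \<theta>] unfolding D_def by blast
  obtain y where "y \<in> V n" "N y = 1"
    and "\<And>w s. w \<in> V (n - 1) \<Longrightarrow> \<bar>s\<bar> \<le> (1 + \<eta>) * N (\<lambda>i. s * y i + L w i)"
    using almost_orthogonal_unit_vector[OF is_norm_on_imp_seminorm_on[OF N] _ L L_ge D \<eta>] n0
    by (metis diff_less zero_less_one)
  then interpret entropy_graph n "n - 1" N L y D S \<eta>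
    using N n L L_le L_ge D S \<eta> by unfold_locales (auto intro: is_norm_on_imp_seminorm_on)
  show ?thesis
  proof (intro exI[of _ graph] conjI)
    show "graph \<subseteq> V n" "approx_convex N graph"
      by (rule graph_subset_V approx_convex_graph)+
    show "ereal (min (S * r / D - k) ((k - (k + 2) * r) / (1 + \<eta>))) \<le> hausdorff_N N graph (conv_hull graph)"
      unfolding k_def by (intro hausdorff_N_ge[OF barycentre_in_conv_hull] dist_barycentre_ge r)
    show "diam_N N graph \<le> ereal (2 * S + k)"
      unfolding k_def by (intro diam_N_le graph_dist_le)
  qed
qed

section \<open>Choice of the parameters\<close>

lemma log2_minus_one_ge:
  fixes x :: real
  assumes x: "1 < x"
  shows "log 2 x - 2 / (x - 1) \<le> log 2 (x - 1)"
proof -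
  have "log 2 x - log 2 (x - 1) = ln (x / (x - 1)) / ln 2"
    using x by (simp add: log_def ln_div diff_divide_distrib)
  also have "\<dots> \<le> (x / (x - 1) - 1) / ln 2"
    using x by (intro divide_right_mono ln_le_minus_one) auto
  also have "\<dots> = (1 / (x - 1)) * (1 / ln 2)"
    using x by (simp add: field_simps)
  also have "\<dots> \<le> (1 / (x - 1)) * 2"
    using x ln2_ge_two_thirds by (intro mult_left_mono) (auto simp: field_simps)
  finally show ?thesis
    by simp
qed

lemma log2_bounds_for_large_n:
  fixes \<epsilon> :: real
  assumes \<epsilon>: "0 < \<epsilon>" and n: "512 + nat \<lceil>8 / \<epsilon>\<rceil> \<le> n"
  shows "9 \<le> log 2 (real n)" and "log 2 (real n) - \<epsilon> / 4 \<le> log 2 (real (n - 1))"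
    and "log 2 (real (n - 1)) \<le> log 2 (real n)"
proof -
  have "log 2 (2 ^ 9) \<le> log 2 (real n)"
    using n by (subst log_le_cancel_iff) auto
  then show "9 \<le> log 2 (real n)"
    using log_pow_cancel[of "2::real" 9] by simp
  have "8 / \<epsilon> \<le> real n - 1"
    using of_nat_ceiling[of "8 / \<epsilon>"] of_nat_mono[OF n, where 'a = real] by simp
  moreover have "0 < real n - 1"
    using n by simp
  ultimately have "2 / (real n - 1) \<le> \<epsilon> / 4"
    using \<epsilon> by (simp add: field_simps)
  then show "log 2 (real n) - \<epsilon> / 4 \<le> log 2 (real (n - 1))"
    using log2_minus_one_ge[of n] n by (simp add: of_nat_diff)
  show "log 2 (real (n - 1)) \<le> log 2 (real n)"
    using n by simp
qed

lemma parameter_estimates: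
  fixes l k d \<epsilon> :: real
  assumes l: "9 \<le> l" and d: "1 \<le> d" and \<epsilon>: "0 < \<epsilon>" "\<epsilon> < 3" and k: "l - \<epsilon> / 4 \<le> k" "k \<le> l"
  defines "r \<equiv> \<epsilon> / (4 * (l + 2))" and "S \<equiv> 10 * d * l * (l + 2) / \<epsilon>" and "\<eta> \<equiv> \<epsilon> / (2 * l)"
  shows "l - \<epsilon> \<le> min (S * r / (d + d / 4) - k) ((k - (k + 2) * r) / (1 + \<eta>))"
    and "2 * S + k \<le> 25 / \<epsilon> * l\<^sup>2 * d"
proof -
  have nz: "l + 2 \<noteq> 0" "\<epsilon> \<noteq> 0"
    using l \<epsilon> by auto
  then have "S * r = 5 / 2 * d * l"
    by (simp add: S_def r_def divide_simps)
  then have "S * r / (d + d / 4) = 2 * l"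
    using d by (simp add: field_simps)
  moreover have "l - \<epsilon> \<le> (k - (k + 2) * r) / (1 + \<eta>)"
  proof -
    have "(k + 2) * r \<le> (l + 2) * r"
      using k r_def l \<epsilon> by (intro mult_right_mono) auto
    also have "(l + 2) * r = \<epsilon> / 4"
      using nz by (simp add: r_def divide_simps)
    finally have "l - \<epsilon> / 2 \<le> k - (k + 2) * r"
      using k by linarith
    moreover have "(l - \<epsilon>) * (1 + \<eta>) \<le> l - \<epsilon> / 2"
      using l \<epsilon> by (simp add: \<eta>_def field_simps)
    moreover have "0 < 1 + \<eta>"
      using l \<epsilon> by (intro add_pos_pos) (simp_all add: \<eta>_def)
    ultimately show ?thesis
      by (simp add: pos_le_divide_eq)
  qed
  ultimately show "l - \<epsilon> \<le> min (S * r / (d + d / 4) - k) ((k - (k + 2) * r) / (1 + \<eta>))"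
    using k \<epsilon> by simp
  have "\<epsilon> * l \<le> 5 * d * l"
    using l d \<epsilon> by (intro mult_right_mono) auto
  moreover have "45 * d * l \<le> 5 * d * l * l"
    using mult_left_mono[of 9 l "5 * d * l"] l d by simp
  ultimately have "\<epsilon> * l + 40 * d * l \<le> 5 * d * l * l"
    by linarith
  then have "(20 * d * l * (l + 2) + \<epsilon> * l) / \<epsilon> \<le> 25 * l\<^sup>2 * d / \<epsilon>"
    using \<epsilon> by (intro divide_right_mono) (simp_all add: power2_eq_square algebra_simps)
  moreover have "2 * S + l = (20 * d * l * (l + 2) + \<epsilon> * l) / \<epsilon>"
    using nz by (simp add: S_def field_simps)
  ultimately have "2 * S + l \<le> 25 / \<epsilon> * l\<^sup>2 * d"
    by simp
  then show "2 * S + k \<le> 25 / \<epsilon> * l\<^sup>2 * d"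
    using k by linarith
qed

theorem theorem4p1:
  fixes \<epsilon> :: real
  assumes "0 < \<epsilon>" and "\<epsilon> < 3"
  shows "\<exists>n0::nat. \<forall>n\<ge>n0. \<forall>N. is_norm_on n N \<longrightarrow>
           (\<exists>A. A \<subseteq> V n \<and> approx_convex N A \<and>
                hausdorff_N N A (conv_hull A) \<ge> ereal (log 2 (real n) - \<epsilon>) \<and>
                diam_N N A \<le> ereal (25 / \<epsilon> * (log 2 (real n))\<^sup>2 * bm_dist_l1 n N))"
proof (rule exI, intro allI impI)
  fix n N assume n: "512 + nat \<lceil>8 / \<epsilon>\<rceil> \<le> n" and N: "is_norm_on n N"
  define l d k where "l = log 2 (real n)" and "d = bm_dist_l1 n N" and "k = log 2 (real (n - 1))"
  have d: "1 \<le> d"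
    unfolding d_def using n N by (intro bm_dist_l1_ge_1) auto
  have l: "9 \<le> l" and k: "l - \<epsilon> / 4 \<le> k" "k \<le> l"
    unfolding l_def k_def using log2_bounds_for_large_n[OF \<open>0 < \<epsilon>\<close> n] by auto
  define r S \<eta> where "r = \<epsilon> / (4 * (l + 2))" and "S = 10 * d * l * (l + 2) / \<epsilon>"
    and "\<eta> = \<epsilon> / (2 * l)"
  have "0 < r" "0 \<le> S" "0 < \<eta>"
    using l d \<open>0 < \<epsilon>\<close> by (simp_all add: r_def S_def \<eta>_def)
  then obtain A where "A \<subseteq> V n" "approx_convex N A"
    and hausdorff: "ereal (min (S * r / (d + d / 4) - k) ((k - (k + 2) * r) / (1 + \<eta>)))
      \<le> hausdorff_N N A (conv_hull A)"
    and diam: "diam_N N A \<le> ereal (2 * S + k)"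
    using approx_convex_set_exists[OF N, of "d / 4" r S \<eta>] n d unfolding d_def k_def by auto
  note estimates = parameter_estimates[OF l d \<open>0 < \<epsilon>\<close> \<open>\<epsilon> < 3\<close> k, folded r_def S_def \<eta>_def]
  have "ereal (log 2 (real n) - \<epsilon>) \<le> hausdorff_N N A (conv_hull A)"
    using estimates(1) by (intro order_trans[OF _ hausdorff]) (simp add: l_def)
  moreover have "diam_N N A \<le> ereal (25 / \<epsilon> * (log 2 (real n))\<^sup>2 * bm_dist_l1 n N)"
    using estimates(2) by (intro order_trans[OF diam]) (simp add: l_def d_def)
  ultimately show "\<exists>A. A \<subseteq> V n \<and> approx_convex N A \<and>
      hausdorff_N N A (conv_hull A) \<ge> ereal (log 2 (real n) - \<epsilon>) \<and>
      diam_N N A \<le> ereal (25 / \<epsilon> * (log 2 (real n))\<^sup>2 * bm_dist_l1 n N)"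
    using \<open>A \<subseteq> V n\<close> \<open>approx_convex N A\<close> by blast
qed

end
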